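(* Let $n\ge 2$ be an integer, $k,c_b>0$, $\rho_0>0$, and let $\lambda_{1,0},\dots,\lambda_{n,0}$ be real numbers with $\lambda_{1,0}=\cdots=\lambda_{J,0}<\lambda_{J+1,0}\le\cdots\le\lambda_{n,0}$ for some integer $1\le J\le n$. Consider the system $$\lambda_i'=-\lambda_i^2+\frac{k}{n}(\rho-c_b)\ (i=1,\dots,n),\qquad \rho'=-\rho\lambda,\quad \lambda=\sum_{i=1}^n\lambda_i,\qquad \rho(0)=\rho_0,\ \lambda_i(0)=\lambda_{i,0},$$ suppose its maximal interval of existence is $[0,t_B)$ with $0<t_B<\infty$, let $u_i(t)=e^{\int_0^t\lambda_i(s)\,ds}$, and let $p,q$ satisfy $\lim_{t\to t_B^-}u_1'(t)u_n(t)=-p$, $\lim_{t\to t_B^-}u_1(t)u_n'(t)=q$. Suppose $p=q$. Then $\lim_{t\to t_B^-}u_1(t)u_n(t)^{\theta}=0$ for every $\theta\le1$; and for $\theta>1$, if $u_1u_n^{\theta}$ has a finite limit as $t\to t_B^-$, then this limit is $0$.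
   Context: Solutions are real-valued and continuously differentiable on $[0,t_B)$. It is known that the limits defining $p,q$ exist. *)

theory Defs
  imports "HOL-Analysis.Analysis"
begin

text \<open>A solution of the initial value problem on the interval [0,T):
  lam i (for i = 1..n) and rho are real-valued, differentiable on [0,T)
  (one-sided at 0) and satisfy the ODE system and initial conditions.
  (Continuity of the derivatives follows from the equations.)\<close>
definition is_solution ::
  "nat \<Rightarrow> real \<Rightarrow> real \<Rightarrow> real \<Rightarrow> (nat \<Rightarrow> real) \<Rightarrow> real
   \<Rightarrow> (nat \<Rightarrow> real \<Rightarrow> real) \<Rightarrow> (real \<Rightarrow> real) \<Rightarrow> bool" where
  "is_solution n k cb rho0 lam0 T lam rho \<longleftrightarrow>
     rho 0 = rho0 \<and> (\<forall>i\<in>{1..n}. lam i 0 = lam0 i) \<and>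
     (\<forall>t\<in>{0..<T}.
        (\<forall>i\<in>{1..n}. (lam i has_real_derivative
            (- ((lam i t) ^ 2) + k / real n * (rho t - cb))) (at t within {0..<T})) \<and>
        (rho has_real_derivative (- rho t * (\<Sum>i=1..n. lam i t))) (at t within {0..<T}))"

definition maximal_solution ::
  "nat \<Rightarrow> real \<Rightarrow> real \<Rightarrow> real \<Rightarrow> (nat \<Rightarrow> real) \<Rightarrow> real
   \<Rightarrow> (nat \<Rightarrow> real \<Rightarrow> real) \<Rightarrow> (real \<Rightarrow> real) \<Rightarrow> bool" where
  "maximal_solution n k cb rho0 lam0 tB lam rho \<longleftrightarrow>
     is_solution n k cb rho0 lam0 tB lam rho \<and>
     \<not> (\<exists>T > tB. \<exists>lam' rho'. is_solution n k cb rho0 lam0 T lam' rho')"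

end

theory Submission
  imports Defs
begin

(* Write u_i = exp (Lam i) with Lam i = integral of lam i, and P = u_1 u_n.  Two conservation
   laws, (lam_i - lam_j) exp (Lam_i + Lam_j) = const and rho exp (sum of Lam_i) = rho0, keep the
   lam_i ordered.  The hypotheses say lam_1 P -> -p and lam_n P -> p, so P' = (lam_1 + lam_n) P -> 0
   and P has a limit at tB.  A positive limit would keep every lam_i and rho bounded, and Picard
   iteration would continue the solution beyond tB; hence P -> 0.  If p were 0, all lam_i would
   coincide and an energy integral would keep Lam_1, hence P, away from 0; so p > 0.  Finally
   (Lam_1 + theta Lam_n)' P -> (theta - 1) p while P t <= tB - t, so Lam_1 + theta Lam_n diverges
   logarithmically, to -infinity if theta < 1 and to +infinity if theta > 1; u_1 u_n^theta is its
   exponential. *)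

section \<open>Real functions near the right end of an interval\<close>

lemma constant_on_atLeastLessThan:
  fixes f :: "real \<Rightarrow> real"
  assumes "\<And>s. s \<in> {a..<b} \<Longrightarrow> (f has_real_derivative 0) (at s within {a..<b})"
    and "t \<in> {a..<b}"
  shows "f t = f a"
proof -
  obtain c where "\<forall>s\<in>{a..<b}. f s = c"
    using has_field_derivative_zero_constant[of "{a..<b}" f] assms(1) by auto
  then show ?thesis using assms(2) by auto
qed

lemma bounded_on_atLeastLessThan:
  fixes f :: "real \<Rightarrow> real"
  assumes "a < b" and "continuous_on {a..<b} f" and "\<forall>\<^sub>F t in at_left b. \<bar>f t\<bar> \<le> C"
  obtains M where "\<And>t. t \<in> {a..<b} \<Longrightarrow> \<bar>f t\<bar> \<le> M"
proof -
  obtain c where c: "c < b" "\<And>t. c < t \<Longrightarrow> t < b \<Longrightarrow> \<bar>f t\<bar> \<le> C"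
    using assms(3) unfolding eventually_at_left_field by blast
  have "compact (f ` {a..max a c})"
    by (rule compact_continuous_image[OF continuous_on_subset[OF assms(2)]]) (use assms(1) c in auto)
  then obtain B where B: "\<And>t. t \<in> {a..max a c} \<Longrightarrow> \<bar>f t\<bar> \<le> B"
    by (meson compact_imp_bounded bounded_real image_eqI)
  show thesis
  proof (rule that[of "max B C"])
    fix t assume "t \<in> {a..<b}"
    then show "\<bar>f t\<bar> \<le> max B C"
      using B[of t] c(2)[of t] by (cases "t \<le> max a c") (auto simp: max_def split: if_splits)
  qed
qed

lemma lipschitz_at_left_of_deriv_bound:
  fixes f :: "real \<Rightarrow> real"
  assumes "\<forall>\<^sub>F x in at_left b. (f has_real_derivative f' x) (at x) \<and> \<bar>f' x\<bar> \<le> C"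
  obtains a where "a < b" and "C-lipschitz_on {a<..<b} f"
proof -
  obtain a where a: "a < b"
    and deriv: "\<And>x. a < x \<Longrightarrow> x < b \<Longrightarrow> (f has_real_derivative f' x) (at x) \<and> \<bar>f' x\<bar> \<le> C"
    using assms unfolding eventually_at_left_field by blast
  have "0 \<le> C" using deriv[of "(a + b) / 2"] a by auto
  have "C-lipschitz_on {a<..<b} f"
  proof (rule lipschitz_onI)
    fix x y assume "x \<in> {a<..<b}" "y \<in> {a<..<b}"
    then show "dist (f x) (f y) \<le> C * dist x y"
      using field_differentiable_bound[of "{a<..<b}" f f' C x y] deriv
      by (auto simp: dist_norm has_field_derivative_at_within)
  qed fact
  with a show thesis by (rule that)
qed

lemma convergent_at_left_of_lipschitz:
  fixes f :: "real \<Rightarrow> real"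
  assumes "a < b" and "C-lipschitz_on {a<..<b} f"
  obtains L where "(f \<longlongrightarrow> L) (at_left b)"
proof -
  have "b \<in> closure {a<..<b}" using assms(1) by simp
  then obtain L where "(f \<longlongrightarrow> L) (at b within {a<..<b})"
    using uniformly_continuous_on_extension_at_closure[OF lipschitz_on_uniformly_continuous[OF assms(2)]]
    by blast
  moreover have "at b within {a<..<b} = at_left b"
    by (rule at_within_nhd[of _ "{a<..}"]) (use assms(1) in auto)
  ultimately show thesis by (intro that) simp
qed

lemma abs_le_of_lipschitz_tendsto_0:
  fixes f :: "real \<Rightarrow> real"
  assumes "C-lipschitz_on {a<..<b} f" and "(f \<longlongrightarrow> 0) (at_left b)" and x: "x \<in> {a<..<b}"
  shows "\<bar>f x\<bar> \<le> C * (b - x)"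
proof -
  have "\<forall>\<^sub>F y in at_left b. y \<in> {x<..<b}"
    using x by (intro eventually_at_left_real) auto
  then have "\<forall>\<^sub>F y in at_left b. \<bar>f x\<bar> - \<bar>f y\<bar> \<le> C * (b - x)"
  proof eventually_elim
    case (elim y)
    then have "y \<in> {x<..<b}" .
    then have "\<bar>f x - f y\<bar> \<le> C * \<bar>x - y\<bar>"
      using lipschitz_onD[OF assms(1), of x y] x by (simp add: dist_real_def)
    moreover have "C * \<bar>x - y\<bar> \<le> C * (b - x)"
      using \<open>y \<in> {x<..<b}\<close> lipschitz_on_nonneg[OF assms(1)] by (intro mult_left_mono) auto
    ultimately show ?case by linarith
  qed
  moreover have "((\<lambda>y. \<bar>f x\<bar> - \<bar>f y\<bar>) \<longlongrightarrow> \<bar>f x\<bar> - \<bar>0\<bar>) (at_left b)"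
    by (intro tendsto_intros assms(2))
  ultimately show ?thesis
    using tendsto_upperbound[of _ _ "at_left b"] x by fastforce
qed

lemma filterlim_at_top_of_deriv_ge:
  fixes f :: "real \<Rightarrow> real"
  assumes c: "0 < c"
    and deriv: "\<forall>\<^sub>F x in at_left b. (f has_real_derivative f' x) (at x) \<and> c / (b - x) \<le> f' x"
  shows "filterlim f at_top (at_left b)"
proof -
  obtain a where a: "a < b"
    and df: "\<And>x. a < x \<Longrightarrow> x < b \<Longrightarrow> (f has_real_derivative f' x) (at x) \<and> c / (b - x) \<le> f' x"
    using deriv unfolding eventually_at_left_field by blast
  define t1 where "t1 = (a + b) / 2"
  have t1: "a < t1" "t1 < b" using a by (auto simp: t1_def)
  define \<psi> where "\<psi> t = f t + c * ln (b - t)" for t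
  have mono: "\<psi> t1 \<le> \<psi> t" if "t1 \<le> t" "t < b" for t
  proof (rule DERIV_nonneg_imp_nondecreasing[OF that(1)])
    fix x assume x: "t1 \<le> x" "x \<le> t"
    with t1 that have "a < x" "x < b" by auto
    have "(\<psi> has_real_derivative f' x + c * (- 1 / (b - x))) (at x)"
      unfolding \<psi>_def using df[OF \<open>a < x\<close> \<open>x < b\<close>] \<open>x < b\<close>
      by (auto intro!: derivative_eq_intros simp: field_simps)
    moreover have "0 \<le> f' x + c * (- 1 / (b - x))"
      using df[OF \<open>a < x\<close> \<open>x < b\<close>] by simp
    ultimately show "\<exists>y. (\<psi> has_real_derivative y) (at x) \<and> 0 \<le> y" by blast
  qed
  have "filterlim (\<lambda>t. b - t) (at_right 0) (at_left b)"
    by (rule tendsto_imp_filterlim_at_right)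
      (auto intro!: tendsto_eq_intros eventually_at_leftI[of a] simp: a)
  then have "filterlim (\<lambda>t. - ln (b - t)) at_top (at_left b)"
    using filterlim_uminus_at_bot filterlim_compose[OF ln_at_0] by fastforce
  then have "filterlim (\<lambda>t. \<psi> t1 + c * - ln (b - t)) at_top (at_left b)"
    by (intro filterlim_tendsto_add_at_top[OF tendsto_const] filterlim_tendsto_pos_mult_at_top[OF tendsto_const c])
  moreover have "\<forall>\<^sub>F t in at_left b. \<psi> t1 + c * - ln (b - t) \<le> f t"
    using eventually_at_left_real[OF t1(2)]
  proof eventually_elim
    case (elim t)
    then show ?case using mono[of t] by (simp add: \<psi>_def)
  qed
  ultimately show ?thesis by (rule filterlim_at_top_mono)
qed

lemma has_real_derivative_continuation:
  fixes f g D :: "real \<Rightarrow> real"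
  assumes t0: "t0 \<in> {a..<b}" "t0 \<le> c" and t: "t \<in> {a..<c}" and eq: "f t0 = g t0"
    and f: "\<And>s. s \<in> {a..t0} \<Longrightarrow> (f has_real_derivative D s) (at s within {a..<b})"
    and g: "\<And>s. s \<in> {t0..c} \<Longrightarrow> (g has_real_derivative D s) (at s within {t0..c})"
  shows "((\<lambda>s. if s \<in> {a..t0} then f s else g s) has_real_derivative D t) (at t within {a..<c})"
proof -
  have split: "{a..c} = {a..t0} \<union> {t0..c}" using t0 by auto
  have left: "{a..t0} \<union> (closure {a..t0} \<inter> closure {t0..c}) = {a..t0}"
    and right: "{t0..c} \<union> (closure {a..t0} \<inter> closure {t0..c}) = {t0..c}"
    using t0 by auto
  have "{a..t0} \<subseteq> {a..<b}" using t0 by auto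
  with f have f': "(f has_real_derivative D s) (at s within {a..t0})" if "s \<in> {a..t0}" for s
    using has_field_derivative_subset that by blast
  have "((\<lambda>s. if s \<in> {a..t0} then f s else g s) has_vector_derivative
      (if t \<in> {a..t0} then D t else D t)) (at t within {a..c})"
    by (rule has_vector_derivative_If_within_closures[OF _ split, unfolded left right])
      (use t split eq f' g in \<open>auto simp: has_real_derivative_iff_has_vector_derivative\<close>)
  then show ?thesis
    by (auto simp: has_real_derivative_iff_has_vector_derivative intro: has_vector_derivative_within_subset)
qed

section \<open>Local existence by Picard iteration\<close>

locale picard_setup =
  fixes F :: "'a::banach \<Rightarrow> 'a" and x0 :: 'a and r B K t0 h :: real
  assumes r_pos: "0 < r" and h_pos: "0 < h"
    and F_bound: "\<And>x. x \<in> cball x0 r \<Longrightarrow> norm (F x) \<le> B"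
    and F_lipschitz: "K-lipschitz_on (cball x0 r) F"
    and step_bound: "h * B \<le> r"
    and step_contraction: "h * K \<le> 1/2"
begin

definition curves :: "(real \<Rightarrow>\<^sub>C 'a) set" where
  "curves = PiC UNIV (\<lambda>_. cball x0 r)"

definition integral_curve :: "(real \<Rightarrow>\<^sub>C 'a) \<Rightarrow> real \<Rightarrow> 'a" where
  "integral_curve g t = x0 + integral {t0..t} (\<lambda>s. F (g s))"

definition picard_op :: "(real \<Rightarrow>\<^sub>C 'a) \<Rightarrow> (real \<Rightarrow>\<^sub>C 'a)" where
  "picard_op g = Bcontfun (\<lambda>t. integral_curve g (clamp t0 (t0 + h) t))"

lemma curves_in_ball: "g \<in> curves \<Longrightarrow> g t \<in> cball x0 r"
  by (auto simp: curves_def dest!: mem_PiCD)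

lemma complete_curves: "complete curves"
  unfolding curves_def by (simp add: complete_eq_closed closed_PiC)

lemma continuous_on_F_curve: "g \<in> curves \<Longrightarrow> continuous_on A (\<lambda>s. F (g s))"
  by (rule continuous_on_compose2[OF lipschitz_on_continuous_on[OF F_lipschitz]])
    (auto intro: curves_in_ball)

lemma integral_bound_on_step:
  fixes f :: "real \<Rightarrow> 'a"
  assumes "t \<in> {t0..t0 + h}" "continuous_on {t0..t} f" "\<And>s. s \<in> {t0..t} \<Longrightarrow> norm (f s) \<le> C"
  shows "norm (integral {t0..t} f) \<le> C * h"
proof -
  have "t0 \<le> t" using assms(1) by simp
  then have "norm (f t0) \<le> C" using assms(3) by simp
  then have "C \<ge> 0" by (rule order_trans[OF norm_ge_zero])
  have "norm (integral {t0..t} f) \<le> C * (t - t0)"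
    using integral_bound[OF \<open>t0 \<le> t\<close> assms(2,3)] .
  also have "\<dots> \<le> C * h" using assms(1) \<open>C \<ge> 0\<close> by (intro mult_left_mono) auto
  finally show ?thesis .
qed

lemma picard_op_apply:
  assumes "g \<in> curves"
  shows "picard_op g t = integral_curve g (clamp t0 (t0 + h) t)"
proof -
  have "continuous_on {t0..t0 + h} (integral_curve g)"
    unfolding integral_curve_def using assms
    by (intro continuous_intros indefinite_integral_continuous_1 integrable_continuous_interval
        continuous_on_F_curve)
  then obtain f :: "real \<Rightarrow>\<^sub>C 'a" where "\<And>t. f t = integral_curve g (clamp t0 (t0 + h) t)"
    using continuous_on_cbox_bcontfunE[of t0 "t0 + h" "integral_curve g"] by auto
  then show ?thesis
    unfolding picard_op_def by (metis apply_bcontfun_inverse ext)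
qed

lemma clamp_in_step: "clamp t0 (t0 + h) t \<in> {t0..t0 + h}"
  using clamp_in_interval[of t0 "t0 + h" t] h_pos by simp

lemma picard_op_curves: "picard_op ` curves \<subseteq> curves"
proof
  fix y assume "y \<in> picard_op ` curves"
  then obtain g where g: "g \<in> curves" and y: "y = picard_op g" by auto
  have "picard_op g t \<in> cball x0 r" for t
  proof -
    have "norm (integral {t0..clamp t0 (t0 + h) t} (\<lambda>s. F (g s))) \<le> B * h"
      using g by (intro integral_bound_on_step clamp_in_step continuous_on_F_curve F_bound curves_in_ball)
    also have "\<dots> \<le> r" using step_bound by (simp add: mult.commute)
    finally show ?thesis using g by (simp add: picard_op_apply integral_curve_def dist_norm)
  qed
  then show "y \<in> curves" unfolding y curves_def by (intro mem_PiCI) auto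
qed

lemma picard_op_contraction:
  assumes g1: "g1 \<in> curves" and g2: "g2 \<in> curves"
  shows "dist (picard_op g1) (picard_op g2) \<le> 1/2 * dist g1 g2"
proof (rule dist_bound)
  fix t
  let ?c = "clamp t0 (t0 + h) t" and ?f = "\<lambda>g s. F (apply_bcontfun g s)"
  have "K \<ge> 0" using F_lipschitz by (rule lipschitz_on_nonneg)
  have "dist (picard_op g1 t) (picard_op g2 t) = norm (integral {t0..?c} (\<lambda>s. ?f g1 s - ?f g2 s))"
    using assms by (simp add: picard_op_apply integral_curve_def dist_norm integral_diff
        integrable_continuous_interval continuous_on_F_curve)
  also have "\<dots> \<le> K * dist g1 g2 * h"
  proof (intro integral_bound_on_step clamp_in_step)
    show "continuous_on {t0..?c} (\<lambda>s. ?f g1 s - ?f g2 s)"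
      using assms by (intro continuous_intros continuous_on_F_curve)
    fix s
    have "norm (?f g1 s - ?f g2 s) \<le> K * norm (g1 s - g2 s)"
      using assms by (intro lipschitz_on_normD[OF F_lipschitz] curves_in_ball)
    also have "\<dots> \<le> K * dist g1 g2"
      using dist_bounded[of g1 s g2] \<open>K \<ge> 0\<close> by (simp add: dist_norm mult_left_mono)
    finally show "norm (?f g1 s - ?f g2 s) \<le> K * dist g1 g2" .
  qed
  also have "\<dots> \<le> 1/2 * dist g1 g2"
    using step_contraction mult_right_mono[OF step_contraction zero_le_dist[of g1 g2]]
    by (simp add: algebra_simps)
  finally show "dist (picard_op g1 t) (picard_op g2 t) \<le> 1/2 * dist g1 g2" .
qed

theorem solution_exists:
  "\<exists>x. x t0 = x0 \<and> (\<forall>t\<in>{t0..t0 + h}. x t \<in> cball x0 r \<and>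
      (x has_vector_derivative F (x t)) (at t within {t0..t0 + h}))"
proof -
  have "const_bcontfun x0 \<in> curves"
    using r_pos by (auto simp: curves_def intro!: mem_PiCI)
  then obtain g where g: "g \<in> curves" and fixed: "picard_op g = g"
    using Banach_fix[OF complete_curves _ _ _ picard_op_curves picard_op_contraction] by auto
  have g_eq: "g t = integral_curve g t" if "t \<in> {t0..t0 + h}" for t
    using picard_op_apply[OF g, of t] that h_pos by (simp add: fixed)
  show ?thesis
  proof (intro exI[of _ "apply_bcontfun g"] conjI ballI)
    show "g t0 = x0" using g_eq[of t0] h_pos by (simp add: integral_curve_def)
    fix t assume t: "t \<in> {t0..t0 + h}"
    show "g t \<in> cball x0 r" using g by (rule curves_in_ball)
    have "(integral_curve g has_vector_derivative F (g t)) (at t within {t0..t0 + h})"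
      unfolding integral_curve_def
      using has_vector_derivative_add[OF has_vector_derivative_const
          integral_has_vector_derivative[OF continuous_on_F_curve[OF g] t]]
      by simp
    then show "(g has_vector_derivative F (g t)) (at t within {t0..t0 + h})"
      by (rule has_vector_derivative_transform[OF t g_eq, rotated]) (simp add: g_eq)
  qed
qed

end

section \<open>The system as an ODE in \<open>\<ell>\<^sup>\<infinity>\<close>\<close>

(* The discrete metric: completeness of bounded continuous functions is only available over
   metric domains, and nat \<Rightarrow>\<^sub>C real has to be a Banach space. *)
instantiation nat :: metric_space
begin

definition dist_nat :: "nat \<Rightarrow> nat \<Rightarrow> real" where
  "dist_nat m n = \<bar>real m - real n\<bar>"

definition uniformity_nat :: "(nat \<times> nat) filter" where
  "uniformity_nat = (INF e\<in>{0<..}. principal {(m, n). dist m n < e})"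

instance
proof
  fix U :: "nat set"
  have eq: "m = n" if "dist m n < 1" for m n :: nat
    using that by (simp add: dist_nat_def abs_less_iff)
  have "eventually (\<lambda>(m, n). m = x \<longrightarrow> n \<in> U) uniformity" if "x \<in> U" for x
    unfolding uniformity_nat_def
    by (rule eventually_INF1[of 1]) (use that eq in \<open>auto simp: eventually_principal\<close>)
  then show "open U \<longleftrightarrow> (\<forall>x\<in>U. eventually (\<lambda>(x', y). x' = x \<longrightarrow> y \<in> U) uniformity)"
    by (simp add: open_discrete)
qed (auto simp: dist_nat_def uniformity_nat_def)

end

instance bcontfun :: (metric_space, banach) banach ..

lemma bcontfun_of_finite_range:
  fixes f :: "'a::discrete_topology \<Rightarrow> 'b::metric_space"
  assumes "finite (range f)"
  shows "f \<in> bcontfun"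
proof -
  have "continuous_on UNIV f"
    unfolding continuous_on_open_invariant by (auto intro: open_discrete)
  then show ?thesis using assms by (simp add: bcontfun_def finite_imp_bounded)
qed

lemma bounded_linear_apply_bcontfun:
  "bounded_linear (\<lambda>f :: 'a::topological_space \<Rightarrow>\<^sub>C 'b::real_normed_vector. f x)"
  by (rule bounded_linear_intro[of _ 1]) (auto simp: norm_bounded)

lemma has_real_derivative_apply_bcontfun:
  fixes X :: "real \<Rightarrow> 'a::topological_space \<Rightarrow>\<^sub>C real"
  assumes "(X has_vector_derivative X') F"
  shows "((\<lambda>s. X s i) has_real_derivative X' i) F"
  using bounded_linear.has_vector_derivative[OF bounded_linear_apply_bcontfun assms]
  by (simp add: has_real_derivative_iff_has_vector_derivative)

(* Coordinate 0 carries rho and coordinates 1..n carry lam_1, ..., lam_n; an infinite-dimensional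
   state space avoids a type whose dimension depends on n. *)
definition state :: "nat \<Rightarrow> real \<Rightarrow> (nat \<Rightarrow> real) \<Rightarrow> (nat \<Rightarrow>\<^sub>C real)" where
  "state n r l = Bcontfun (\<lambda>i. if i = 0 then r else if i \<le> n then l i else 0)"

definition system_field :: "nat \<Rightarrow> real \<Rightarrow> real \<Rightarrow> (nat \<Rightarrow>\<^sub>C real) \<Rightarrow> (nat \<Rightarrow>\<^sub>C real)" where
  "system_field n k cb x =
     state n (- x 0 * (\<Sum>j=1..n. x j)) (\<lambda>i. - (x i)\<^sup>2 + k / real n * (x 0 - cb))"

lemma state_apply: "state n r l i = (if i = 0 then r else if i \<le> n then l i else 0)"
proof -
  have "range (\<lambda>i. if i = 0 then r else if i \<le> n then l i else 0) \<subseteq> insert r (insert 0 (l ` {1..n}))"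
    by auto
  then have "(\<lambda>i. if i = 0 then r else if i \<le> n then l i else 0) \<in> bcontfun"
    by (intro bcontfun_of_finite_range) (auto intro: finite_subset)
  then show ?thesis by (simp add: state_def Bcontfun_inverse)
qed

lemma norm_state_le:
  assumes "\<bar>r\<bar> \<le> C" "\<And>i. i \<in> {1..n} \<Longrightarrow> \<bar>l i\<bar> \<le> C"
  shows "norm (state n r l) \<le> C"
  using assms by (intro norm_bound) (auto simp: state_apply)

lemma abs_component_le_norm: "\<bar>x i\<bar> \<le> norm x" for x :: "nat \<Rightarrow>\<^sub>C real"
  using norm_bounded[of x i] by simp

lemma system_field_bound:
  assumes "norm x \<le> A"
  shows "norm (system_field n k cb x) \<le> (real n + 1) * A\<^sup>2 + \<bar>k / real n\<bar> * (A + \<bar>cb\<bar>)"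
proof -
  have comp: "\<bar>x i\<bar> \<le> A" for i using abs_component_le_norm assms order_trans by blast
  then have "A \<ge> 0" using abs_ge_zero order_trans by blast
  have sq: "(x i)\<^sup>2 \<le> A\<^sup>2" for i using comp by (metis abs_ge_zero power2_abs power_mono)
  have sum: "\<bar>\<Sum>j=1..n. x j\<bar> \<le> real n * A"
    using sum_norm_bound[of "{1..n}" "\<lambda>j. x j" A] comp by simp
  have "\<bar>- x 0 * (\<Sum>j=1..n. x j)\<bar> \<le> A * (real n * A)"
    unfolding abs_mult abs_minus using comp sum \<open>A \<ge> 0\<close> by (intro mult_mono) auto
  moreover have "\<bar>- (x i)\<^sup>2 + k / real n * (x 0 - cb)\<bar> \<le> A\<^sup>2 + \<bar>k / real n\<bar> * (A + \<bar>cb\<bar>)" for i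
  proof -
    have "\<bar>k / real n * (x 0 - cb)\<bar> \<le> \<bar>k / real n\<bar> * (A + \<bar>cb\<bar>)"
      unfolding abs_mult using comp[of 0] by (intro mult_left_mono) auto
    moreover have "\<bar>- (x i)\<^sup>2\<bar> \<le> A\<^sup>2" using sq[of i] by simp
    ultimately show ?thesis
      using abs_triangle_ineq[of "- (x i)\<^sup>2" "k / real n * (x 0 - cb)"] by linarith
  qed
  moreover have "A * (real n * A) \<le> (real n + 1) * A\<^sup>2 + \<bar>k / real n\<bar> * (A + \<bar>cb\<bar>)"
    and "A\<^sup>2 \<le> (real n + 1) * A\<^sup>2"
    using \<open>A \<ge> 0\<close> by (simp_all add: power2_eq_square algebra_simps)
  ultimately show ?thesis
    unfolding system_field_def by (intro norm_state_le) (fastforce intro: order_trans)+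
qed

lemma abs_diff_mult_sum_le:
  fixes x y :: "nat \<Rightarrow> real"
  assumes x: "\<And>i. \<bar>x i\<bar> \<le> A" and y: "\<And>i. \<bar>y i\<bar> \<le> A" and xy: "\<And>i. \<bar>x i - y i\<bar> \<le> d"
  shows "\<bar>x 0 * (\<Sum>j=1..n. x j) - y 0 * (\<Sum>j=1..n. y j)\<bar> \<le> 2 * real n * A * d"
proof -
  have "0 \<le> A" "0 \<le> d" using x[of 0] xy[of 0] by linarith+
  have "\<bar>\<Sum>j=1..n. x j\<bar> \<le> real n * A" "\<bar>\<Sum>j=1..n. x j - y j\<bar> \<le> real n * d"
    using sum_norm_bound[of "{1..n}" x A] sum_norm_bound[of "{1..n}" "\<lambda>j. x j - y j" d] x xy
    by simp_all
  then have "\<bar>(x 0 - y 0) * (\<Sum>j=1..n. x j)\<bar> \<le> d * (real n * A)"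
    and "\<bar>y 0 * (\<Sum>j=1..n. x j - y j)\<bar> \<le> A * (real n * d)"
    unfolding abs_mult using xy y \<open>0 \<le> A\<close> \<open>0 \<le> d\<close> by (auto intro: mult_mono)
  moreover have "x 0 * (\<Sum>j=1..n. x j) - y 0 * (\<Sum>j=1..n. y j)
      = (x 0 - y 0) * (\<Sum>j=1..n. x j) + y 0 * (\<Sum>j=1..n. x j - y j)"
    by (simp add: algebra_simps sum_subtractf)
  ultimately show ?thesis
    using abs_triangle_ineq[of "(x 0 - y 0) * (\<Sum>j=1..n. x j)" "y 0 * (\<Sum>j=1..n. x j - y j)"]
    by (simp add: algebra_simps)
qed

lemma system_field_component_diff:
  fixes x y :: "nat \<Rightarrow>\<^sub>C real"
  assumes "x \<in> cball 0 A" "y \<in> cball 0 A"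
  shows "\<bar>system_field n k cb x i - system_field n k cb y i\<bar>
    \<le> (2 * (real n + 1) * A + \<bar>k / real n\<bar>) * dist x y"
proof -
  have cx: "\<bar>x i\<bar> \<le> A" and cy: "\<bar>y i\<bar> \<le> A" for i
    using assms abs_component_le_norm[of x i] abs_component_le_norm[of y i] by auto
  define d where "d = dist x y"
  have "0 \<le> A" "0 \<le> d" using cx[of 0] by (auto simp: d_def)
  have dxy: "\<bar>x i - y i\<bar> \<le> d" for i
    using dist_bounded[of x i y] by (simp add: d_def dist_real_def)
  have lam_part: "\<bar>(- (x i)\<^sup>2 + k / real n * (x 0 - cb)) - (- (y i)\<^sup>2 + k / real n * (y 0 - cb))\<bar>
      \<le> d * (2 * A) + \<bar>k / real n\<bar> * d"
  proof -
    have "(- (x i)\<^sup>2 + k / real n * (x 0 - cb)) - (- (y i)\<^sup>2 + k / real n * (y 0 - cb))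
        = k / real n * (x 0 - y 0) - (x i - y i) * (x i + y i)"
      by (simp add: algebra_simps power2_eq_square)
    also have "\<bar>\<dots>\<bar> \<le> \<bar>k / real n * (x 0 - y 0)\<bar> + \<bar>(x i - y i) * (x i + y i)\<bar>"
      by (rule abs_triangle_ineq4)
    also have "\<dots> \<le> \<bar>k / real n\<bar> * d + d * (2 * A)"
      unfolding abs_mult using dxy cx[of i] cy[of i] \<open>0 \<le> d\<close>
      by (intro add_mono mult_left_mono mult_mono) auto
    finally show ?thesis by simp
  qed
  have "2 * real n * A * d \<le> (2 * (real n + 1) * A + \<bar>k / real n\<bar>) * d"
    and "d * (2 * A) + \<bar>k / real n\<bar> * d \<le> (2 * (real n + 1) * A + \<bar>k / real n\<bar>) * d"
    using \<open>0 \<le> A\<close> \<open>0 \<le> d\<close> by (simp_all add: algebra_simps mult_right_mono)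
  then show ?thesis
    using abs_diff_mult_sum_le[of x A y d n, OF cx cy dxy] lam_part \<open>0 \<le> A\<close> \<open>0 \<le> d\<close>
    by (auto simp: system_field_def state_apply abs_minus_commute d_def intro: order_trans)
qed

lemma system_field_lipschitz:
  assumes "0 \<le> A"
  shows "(2 * (real n + 1) * A + \<bar>k / real n\<bar>)-lipschitz_on (cball 0 A) (system_field n k cb)"
proof (rule lipschitz_onI)
  fix x y :: "nat \<Rightarrow>\<^sub>C real" assume "x \<in> cball 0 A" "y \<in> cball 0 A"
  then show "dist (system_field n k cb x) (system_field n k cb y)
      \<le> (2 * (real n + 1) * A + \<bar>k / real n\<bar>) * dist x y"
    by (intro dist_bound) (unfold dist_real_def, rule system_field_component_diff)
qed (use assms in simp)

lemma step_size_exists: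
  fixes B K :: real
  assumes "0 \<le> B" "0 \<le> K"
  obtains h where "0 < h" "h * B \<le> 1" "h * K \<le> 1/2"
proof
  define h where "h = min (1 / (B + 1)) (1 / (2 * (K + 1)))"
  show "0 < h" using assms by (simp add: h_def)
  have "h * B \<le> 1 / (B + 1) * B" using assms by (intro mult_right_mono) (auto simp: h_def)
  also have "\<dots> \<le> 1" using assms by (simp add: field_simps)
  finally show "h * B \<le> 1" .
  have "h * K \<le> 1 / (2 * (K + 1)) * K" using assms by (intro mult_right_mono) (auto simp: h_def)
  also have "\<dots> \<le> 1/2" using assms by (simp add: field_simps)
  finally show "h * K \<le> 1/2" .
qed

section \<open>Solutions: conservation laws and continuation\<close>

definition exp_antideriv :: "real \<Rightarrow> real \<Rightarrow> real" where
  "exp_antideriv m x = (if m = 0 then x else (1 - exp (- m * x)) / m)"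

lemma exp_antideriv_deriv: "(exp_antideriv m has_real_derivative exp (- m * x)) (at x)"
proof (cases "m = 0")
  case True
  then show ?thesis by (simp add: exp_antideriv_def[abs_def])
next
  case False
  then show ?thesis
    unfolding exp_antideriv_def[abs_def]
    by (auto intro!: derivative_eq_intros simp: field_simps)
qed

lemma exp_antideriv_le: "0 \<le> m \<Longrightarrow> x \<le> 0 \<Longrightarrow> exp_antideriv m x \<le> x"
  using exp_ge_add_one_self[of "- m * x"] by (auto simp: exp_antideriv_def field_simps)

locale solution =
  fixes n :: nat and k cb rho0 :: real and lam0 :: "nat \<Rightarrow> real" and T :: real
    and lam :: "nat \<Rightarrow> real \<Rightarrow> real" and rho :: "real \<Rightarrow> real"
  assumes is_solution: "is_solution n k cb rho0 lam0 T lam rho" and T_pos: "0 < T"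
begin

lemma rho_0: "rho 0 = rho0"
  using is_solution by (simp add: is_solution_def)

lemma lam_0: "i \<in> {1..n} \<Longrightarrow> lam i 0 = lam0 i"
  using is_solution by (simp add: is_solution_def)

lemma lam_deriv:
  "t \<in> {0..<T} \<Longrightarrow> i \<in> {1..n} \<Longrightarrow>
    (lam i has_real_derivative - (lam i t)\<^sup>2 + k / real n * (rho t - cb)) (at t within {0..<T})"
  using is_solution by (simp add: is_solution_def)

lemma rho_deriv:
  "t \<in> {0..<T} \<Longrightarrow> (rho has_real_derivative - rho t * (\<Sum>i=1..n. lam i t)) (at t within {0..<T})"
  using is_solution by (simp add: is_solution_def)

lemma continuous_on_lam: "i \<in> {1..n} \<Longrightarrow> continuous_on {0..<T} (lam i)"
  unfolding continuous_on_eq_continuous_within using lam_deriv DERIV_continuous by blast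

definition Lam :: "nat \<Rightarrow> real \<Rightarrow> real" where
  "Lam i t = integral {0..t} (lam i)"

lemma Lam_0 [simp]: "Lam i 0 = 0"
  by (simp add: Lam_def)

lemma Lam_deriv:
  assumes t: "t \<in> {0..<T}" and i: "i \<in> {1..n}"
  shows "(Lam i has_real_derivative lam i t) (at t within {0..<T})"
proof -
  define b where "b = (t + T) / 2"
  have b: "t < b" "b < T" using t by (auto simp: b_def)
  have "((\<lambda>s. integral {0..s} (lam i)) has_vector_derivative lam i t) (at t within {0..b})"
    using t b by (intro integral_has_vector_derivative continuous_on_subset[OF continuous_on_lam[OF i]]) auto
  moreover have "at t within {0..<T} = at t within {0..b}"
    by (rule at_within_nhd[of _ "{..<b}"]) (use t b in auto)
  ultimately show ?thesis
    by (simp add: Lam_def[abs_def] has_real_derivative_iff_has_vector_derivative)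
qed

lemma Lam_deriv_at:
  "t \<in> {0<..<T} \<Longrightarrow> i \<in> {1..n} \<Longrightarrow> (Lam i has_real_derivative lam i t) (at t)"
proof -
  assume t: "t \<in> {0<..<T}" and i: "i \<in> {1..n}"
  have "at t within {0..<T} = at t within UNIV"
    by (rule at_within_nhd[of _ "{0<..<T}"]) (use t in auto)
  then show ?thesis using Lam_deriv[OF _ i, of t] t by simp
qed

lemma lam_difference_conserved:
  assumes "i \<in> {1..n}" "j \<in> {1..n}" "t \<in> {0..<T}"
  shows "(lam i t - lam j t) * exp (Lam i t + Lam j t) = lam0 i - lam0 j"
proof -
  have "((\<lambda>t. (lam i t - lam j t) * exp (Lam i t + Lam j t)) has_real_derivative 0) (at s within {0..<T})"
    if s: "s \<in> {0..<T}" for s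
    using lam_deriv[OF s assms(1)] lam_deriv[OF s assms(2)] Lam_deriv[OF s assms(1)] Lam_deriv[OF s assms(2)]
    by (auto intro!: derivative_eq_intros simp: algebra_simps power2_eq_square)
  from constant_on_atLeastLessThan[OF this assms(3)] show ?thesis
    using assms(1,2) by (simp add: lam_0)
qed

lemma rho_conserved:
  assumes "t \<in> {0..<T}"
  shows "rho t * exp (\<Sum>i=1..n. Lam i t) = rho0"
proof -
  have "((\<lambda>t. rho t * exp (\<Sum>i=1..n. Lam i t)) has_real_derivative 0) (at s within {0..<T})"
    if s: "s \<in> {0..<T}" for s
    using rho_deriv[OF s] Lam_deriv[OF s]
    by (auto intro!: derivative_eq_intros simp: algebra_simps)
  from constant_on_atLeastLessThan[OF this assms] show ?thesis by (simp add: rho_0)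
qed

lemma lam_le_lam:
  assumes "i \<in> {1..n}" "j \<in> {1..n}" "t \<in> {0..<T}" "lam0 i \<le> lam0 j"
  shows "lam i t \<le> lam j t"
proof -
  have "lam j t - lam i t = (lam0 j - lam0 i) / exp (Lam j t + Lam i t)"
    using lam_difference_conserved[OF assms(2,1,3)] by (simp add: field_simps)
  moreover have "0 \<le> (lam0 j - lam0 i) / exp (Lam j t + Lam i t)" using assms(4) by simp
  ultimately show ?thesis by linarith
qed

lemma abs_Lam_le:
  assumes "t \<in> {0..<T}" "i \<in> {1..n}" and M: "\<And>s. s \<in> {0..<T} \<Longrightarrow> \<bar>lam i s\<bar> \<le> M"
  shows "\<bar>Lam i t\<bar> \<le> M * T"
proof -
  have "0 \<le> M" using M[of 0] T_pos by force
  have "norm (integral {0..t} (lam i)) \<le> M * (t - 0)"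
    using assms by (intro integral_bound) (auto intro: continuous_on_subset[OF continuous_on_lam])
  then have "\<bar>Lam i t\<bar> \<le> M * t" by (simp add: Lam_def)
  also have "\<dots> \<le> M * T" using assms(1) \<open>0 \<le> M\<close> by (intro mult_left_mono) auto
  finally show ?thesis .
qed

lemma lam_eq_lam:
  assumes "i \<in> {1..n}" "j \<in> {1..n}" "t \<in> {0..<T}" "lam0 i = lam0 j"
  shows "lam i t = lam j t"
  using lam_le_lam[OF assms(1-3)] lam_le_lam[OF assms(2,1,3)] assms(4) by simp

context
  assumes equal_rates: "\<And>i. i \<in> {1..n} \<Longrightarrow> lam0 i = lam0 1" and n_pos: "1 \<le> n"
begin

lemma Lam_eq_Lam_first: "i \<in> {1..n} \<Longrightarrow> s \<in> {0..<T} \<Longrightarrow> Lam i s = Lam 1 s"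
  unfolding Lam_def using n_pos by (intro integral_cong lam_eq_lam equal_rates) auto

lemma rho_of_equal_rates:
  assumes s: "s \<in> {0..<T}"
  shows "rho s * (exp (Lam 1 s))\<^sup>2 = rho0 * exp (- (real n - 2) * Lam 1 s)"
proof -
  have "(\<Sum>i=1..n. Lam i s) = (\<Sum>i=1..n. Lam 1 s)"
    using s by (intro sum.cong[OF refl Lam_eq_Lam_first])
  then have "rho s * exp (real n * Lam 1 s) = rho0"
    using rho_conserved[OF s] by simp
  moreover have "(exp (Lam 1 s))\<^sup>2 = exp (real n * Lam 1 s) * exp (- (real n - 2) * Lam 1 s)"
    by (simp add: power2_eq_square mult_exp_exp algebra_simps)
  ultimately show ?thesis by (metis mult.assoc)
qed

(* With equal rates, w = exp (Lam 1) solves w'' = k/n (rho0 w^(1-n) - cb w), and energy is its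
   first integral written in the variable Lam 1, so that n = 2 needs no separate case. *)
definition energy :: "real \<Rightarrow> real" where
  "energy t = (lam 1 t * exp (Lam 1 t))\<^sup>2 / 2 + k / real n * cb * (exp (Lam 1 t))\<^sup>2 / 2
    - k / real n * rho0 * exp_antideriv (real n - 2) (Lam 1 t)"

lemma energy_deriv:
  assumes s: "s \<in> {0..<T}"
  shows "(energy has_real_derivative 0) (at s within {0..<T})"
proof -
  have one: "1 \<in> {1..n}" using n_pos by auto
  have de: "((\<lambda>t. exp (Lam 1 t)) has_real_derivative exp (Lam 1 s) * lam 1 s) (at s within {0..<T})"
    by (rule DERIV_chain2[OF DERIV_exp Lam_deriv[OF s one]])
  have dW: "((\<lambda>t. lam 1 t * exp (Lam 1 t)) has_real_derivative
      k / real n * (rho s - cb) * exp (Lam 1 s)) (at s within {0..<T})"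
    using DERIV_mult[OF lam_deriv[OF s one] de] by (simp add: algebra_simps power2_eq_square)
  have dA: "((\<lambda>t. exp_antideriv (real n - 2) (Lam 1 t)) has_real_derivative
      exp (- (real n - 2) * Lam 1 s) * lam 1 s) (at s within {0..<T})"
    by (rule DERIV_chain2[OF exp_antideriv_deriv Lam_deriv[OF s one]])
  have d1: "((\<lambda>t. (lam 1 t * exp (Lam 1 t))\<^sup>2 / 2) has_real_derivative
      lam 1 s * exp (Lam 1 s) * (k / real n * (rho s - cb) * exp (Lam 1 s))) (at s within {0..<T})"
    by (rule DERIV_cong[OF DERIV_cdivide[OF DERIV_power[OF dW, of 2], of 2]]) simp
  have d2: "((\<lambda>t. k / real n * cb * (exp (Lam 1 t))\<^sup>2 / 2) has_real_derivative
      k / real n * cb * (exp (Lam 1 s) * (exp (Lam 1 s) * lam 1 s))) (at s within {0..<T})"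
    by (rule DERIV_cong[OF DERIV_cdivide[OF DERIV_cmult[OF DERIV_power[OF de, of 2]], of _ 2]]) simp
  have alg: "l * e * (a * (r - cb) * e) + a * cb * (e * (e * l)) - a * rho0 * (E * l)
      = a * l * (r * e\<^sup>2 - rho0 * E)" for a l e r E :: real
    by (simp add: algebra_simps power2_eq_square)
  have "(energy has_real_derivative
      k / real n * lam 1 s * (rho s * (exp (Lam 1 s))\<^sup>2 - rho0 * exp (- (real n - 2) * Lam 1 s)))
      (at s within {0..<T})"
    unfolding energy_def[abs_def]
    by (rule DERIV_cong[OF DERIV_diff[OF DERIV_add[OF d1 d2] DERIV_cmult[OF dA]] alg])
  then show ?thesis using rho_of_equal_rates[OF s] by simp
qed

lemma energy_conserved: "t \<in> {0..<T} \<Longrightarrow> energy t = (lam0 1)\<^sup>2 / 2 + k / real n * cb / 2"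
  using constant_on_atLeastLessThan[OF energy_deriv] n_pos
  by (simp add: energy_def lam_0 exp_antideriv_def)

lemma Lam_bounded_below:
  assumes "0 < k" "0 < cb" "0 < rho0" "2 \<le> n"
  obtains C where "\<And>t. t \<in> {0..<T} \<Longrightarrow> C \<le> Lam 1 t"
proof
  define H0 where "H0 = (lam0 1)\<^sup>2 / 2 + k / real n * cb / 2"
  have a_pos: "0 < k / real n * rho0" using assms by simp
  fix t assume t: "t \<in> {0..<T}"
  have "0 \<le> (lam 1 t * exp (Lam 1 t))\<^sup>2 / 2 + k / real n * cb * (exp (Lam 1 t))\<^sup>2 / 2"
    using assms by simp
  then have "- H0 \<le> k / real n * rho0 * exp_antideriv (real n - 2) (Lam 1 t)"
    using energy_conserved[OF t] by (simp add: energy_def H0_def)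
  then have bound: "- H0 / (k / real n * rho0) \<le> exp_antideriv (real n - 2) (Lam 1 t)"
    by (subst pos_divide_le_eq[OF a_pos]) (simp add: mult.commute)
  show "min 0 (- H0 / (k / real n * rho0)) \<le> Lam 1 t"
  proof (cases "Lam 1 t \<le> 0")
    case True
    then show ?thesis
      using bound exp_antideriv_le[of "real n - 2" "Lam 1 t"] assms(4) by simp
  qed simp
qed

end

lemma solution_continued:
  fixes X :: "real \<Rightarrow> nat \<Rightarrow>\<^sub>C real"
  assumes t0: "t0 \<in> {0..<T}" "t0 < c"
    and X0: "X t0 = state n (rho t0) (\<lambda>i. lam i t0)"
    and X: "\<And>t. t \<in> {t0..c} \<Longrightarrow> (X has_vector_derivative system_field n k cb (X t)) (at t within {t0..c})"
  defines "lam' \<equiv> \<lambda>i t. if t \<in> {0..t0} then lam i t else X t i"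
    and "rho' \<equiv> \<lambda>t. if t \<in> {0..t0} then rho t else X t 0"
  shows "is_solution n k cb rho0 lam0 c lam' rho'"
  unfolding is_solution_def
proof (intro conjI ballI)
  have left: "lam' i s = lam i s" "rho' s = rho s" if "s \<in> {0..t0}" for i s
    using that by (simp_all add: lam'_def rho'_def)
  have right: "lam' i s = X s i" if "s \<in> {t0..c}" "i \<in> {1..n}" for i s
    using that X0 by (auto simp: lam'_def state_apply)
  have right_rho: "rho' s = X s 0" if "s \<in> {t0..c}" for s
    using that X0 by (auto simp: rho'_def state_apply)
  show "rho' 0 = rho0" "\<And>i. i \<in> {1..n} \<Longrightarrow> lam' i 0 = lam0 i"
    using t0 by (simp_all add: lam'_def rho'_def rho_0 lam_0)
  fix t assume t: "t \<in> {0..<c}"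
  show "(lam' i has_real_derivative - (lam' i t)\<^sup>2 + k / real n * (rho' t - cb)) (at t within {0..<c})"
    if i: "i \<in> {1..n}" for i
  proof -
    have "((\<lambda>s. if s \<in> {0..t0} then lam i s else X s i) has_real_derivative
        - (lam' i t)\<^sup>2 + k / real n * (rho' t - cb)) (at t within {0..<c})"
    proof (rule has_real_derivative_continuation[OF t0(1) _ t,
          where D = "\<lambda>s. - (lam' i s)\<^sup>2 + k / real n * (rho' s - cb)"])
      show "(lam i has_real_derivative - (lam' i s)\<^sup>2 + k / real n * (rho' s - cb)) (at s within {0..<T})"
        if "s \<in> {0..t0}" for s
        using lam_deriv[OF _ i, of s] that t0 by (simp add: left)
      show "((\<lambda>s. X s i) has_real_derivative - (lam' i s)\<^sup>2 + k / real n * (rho' s - cb))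
          (at s within {t0..c})" if "s \<in> {t0..c}" for s
        using has_real_derivative_apply_bcontfun[OF X[OF that], of i] that i
        by (simp add: right right_rho system_field_def state_apply)
    qed (use t0 X0 i in \<open>auto simp: state_apply\<close>)
    then show ?thesis by (simp add: lam'_def)
  qed
  have "((\<lambda>s. if s \<in> {0..t0} then rho s else X s 0) has_real_derivative
      - rho' t * (\<Sum>i=1..n. lam' i t)) (at t within {0..<c})"
  proof (rule has_real_derivative_continuation[OF t0(1) _ t,
        where D = "\<lambda>s. - rho' s * (\<Sum>i=1..n. lam' i s)"])
    show "(rho has_real_derivative - rho' s * (\<Sum>i=1..n. lam' i s)) (at s within {0..<T})"
      if "s \<in> {0..t0}" for s
      using rho_deriv[of s] that t0 by (simp add: left)
    show "((\<lambda>s. X s 0) has_real_derivative - rho' s * (\<Sum>i=1..n. lam' i s)) (at s within {t0..c})"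
      if "s \<in> {t0..c}" for s
      using has_real_derivative_apply_bcontfun[OF X[OF that], of 0] that
      by (simp add: right right_rho system_field_def state_apply)
  qed (use t0 X0 in \<open>auto simp: state_apply\<close>)
  then show "(rho' has_real_derivative - rho' t * (\<Sum>i=1..n. lam' i t)) (at t within {0..<c})"
    by (simp add: rho'_def)
qed

(* The Picard step h depends on M and R only, so a step started after T - h/2 passes T. *)
theorem bounded_solution_extends:
  assumes lam_bound: "\<And>i t. i \<in> {1..n} \<Longrightarrow> t \<in> {0..<T} \<Longrightarrow> \<bar>lam i t\<bar> \<le> M"
    and rho_bound: "\<And>t. t \<in> {0..<T} \<Longrightarrow> \<bar>rho t\<bar> \<le> R"
  shows "\<exists>T'>T. \<exists>lam' rho'. is_solution n k cb rho0 lam0 T' lam' rho'"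
proof -
  have "0 \<le> R" using rho_bound[of 0] T_pos by force
  define A where "A = max M R + 1"
  define B where "B = (real n + 1) * A\<^sup>2 + \<bar>k / real n\<bar> * (A + \<bar>cb\<bar>)"
  define K where "K = 2 * (real n + 1) * A + \<bar>k / real n\<bar>"
  have "0 \<le> A" "0 \<le> B" "0 \<le> K"
    using \<open>0 \<le> R\<close> by (auto simp: A_def B_def K_def)
  then obtain h where h_pos: "0 < h" and "h * B \<le> 1" "h * K \<le> 1/2"
    using step_size_exists by blast
  define t0 where "t0 = max (T / 2) (T - h / 2)"
  have t0: "t0 \<in> {0..<T}" "T < t0 + h" using T_pos h_pos by (auto simp: t0_def)
  define x0 where "x0 = state n (rho t0) (\<lambda>i. lam i t0)"
  have "norm x0 \<le> max M R"
    unfolding x0_def using lam_bound rho_bound t0(1) by (intro norm_state_le) fastforce+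
  have ball: "cball x0 1 \<subseteq> cball 0 A"
  proof
    fix x assume "x \<in> cball x0 1"
    then have "norm x \<le> norm x0 + 1"
      using norm_triangle_sub[of x x0] by (simp add: dist_norm norm_minus_commute)
    then show "x \<in> cball 0 A" using \<open>norm x0 \<le> max M R\<close> by (simp add: A_def)
  qed
  interpret picard_setup "system_field n k cb" x0 1 B K t0 h
  proof
    show "\<And>x. x \<in> cball x0 1 \<Longrightarrow> norm (system_field n k cb x) \<le> B"
      using ball unfolding B_def by (intro system_field_bound) auto
    show "K-lipschitz_on (cball x0 1) (system_field n k cb)"
      unfolding K_def by (rule lipschitz_on_subset[OF system_field_lipschitz[OF \<open>0 \<le> A\<close>] ball])
  qed (use h_pos \<open>h * B \<le> 1\<close> \<open>h * K \<le> 1/2\<close> in auto)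
  obtain X where "X t0 = x0"
    and "\<And>t. t \<in> {t0..t0 + h} \<Longrightarrow>
      (X has_vector_derivative system_field n k cb (X t)) (at t within {t0..t0 + h})"
    using solution_exists by blast
  then have "is_solution n k cb rho0 lam0 (t0 + h)
      (\<lambda>i t. if t \<in> {0..t0} then lam i t else X t i) (\<lambda>t. if t \<in> {0..t0} then rho t else X t 0)"
    using t0 h_pos by (intro solution_continued) (auto simp: x0_def)
  then show ?thesis using t0 by blast
qed

end

section \<open>Blow-up with \<open>p = q\<close>\<close>

lemma lam0_between_of_blocks:
  fixes lam0 :: "nat \<Rightarrow> real"
  assumes J: "1 \<le> J" "J \<le> n" and block: "\<forall>i\<in>{1..J}. lam0 i = lam0 1"
    and gap: "J < n \<longrightarrow> lam0 J < lam0 (J + 1)"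
    and sorted: "\<forall>i j. J + 1 \<le> i \<and> i \<le> j \<and> j \<le> n \<longrightarrow> lam0 i \<le> lam0 j"
    and i: "i \<in> {1..n}"
  shows "lam0 1 \<le> lam0 i \<and> lam0 i \<le> lam0 n"
proof -
  have blk: "lam0 j = lam0 1" if "1 \<le> j" "j \<le> J" for j
    using bspec[OF block, of j] that by simp
  have srt: "lam0 j \<le> lam0 j'" if "J + 1 \<le> j" "j \<le> j'" "j' \<le> n" for j j'
    using sorted that by blast
  show ?thesis
  proof (cases "J < n")
    case True
    then have "lam0 1 < lam0 (J + 1)" "lam0 (J + 1) \<le> lam0 n"
      using gap blk[of J] srt[of "J + 1" n] J by auto
    then show ?thesis
      using blk[of i] srt[of "J + 1" i] srt[of i n] i by (cases "i \<le> J") auto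
  next
    case False
    then show ?thesis using blk[of i] blk[of n] J i by auto
  qed
qed

locale blowup = solution n k cb rho0 lam0 tB lam rho
  for n k cb rho0 lam0 tB lam rho +
  fixes p :: real and u :: "nat \<Rightarrow> real \<Rightarrow> real"
  assumes n_ge_2: "2 \<le> n" and k_pos: "0 < k" and cb_pos: "0 < cb" and rho0_pos: "0 < rho0"
    and lam0_between: "\<And>i. i \<in> {1..n} \<Longrightarrow> lam0 1 \<le> lam0 i \<and> lam0 i \<le> lam0 n"
    and maximal: "\<not> (\<exists>T > tB. \<exists>lam' rho'. is_solution n k cb rho0 lam0 T lam' rho')"
    and u_def: "\<And>i t. u i t = exp (integral {0..t} (lam i))"
    and lim_first: "((\<lambda>t. deriv (u 1) t * u n t) \<longlongrightarrow> - p) (at_left tB)"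
    and lim_last: "((\<lambda>t. u 1 t * deriv (u n) t) \<longlongrightarrow> p) (at_left tB)"
begin

lemma one_in: "1 \<in> {1..n}" and n_in: "n \<in> {1..n}"
  using n_ge_2 by auto

lemma u_eq: "u i t = exp (Lam i t)"
  by (simp add: u_def Lam_def)

definition P :: "real \<Rightarrow> real" where
  "P t = exp (Lam 1 t + Lam n t)"

lemma P_pos: "0 < P t"
  by (simp add: P_def)

lemma eventually_inside: "\<forall>\<^sub>F t in at_left tB. t \<in> {0<..<tB}"
  using eventually_at_left_real[OF T_pos] .

lemma deriv_u: "t \<in> {0<..<tB} \<Longrightarrow> i \<in> {1..n} \<Longrightarrow> deriv (u i) t = lam i t * u i t"
  using DERIV_chain2[OF DERIV_exp Lam_deriv_at] by (intro DERIV_imp_deriv) (simp add: u_eq[abs_def] mult.commute)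

lemma lam_first_P_tendsto: "((\<lambda>t. lam 1 t * P t) \<longlongrightarrow> - p) (at_left tB)"
proof (rule Lim_transform_eventually[OF lim_first])
  have "deriv (u 1) t * u n t = lam 1 t * P t" if "t \<in> {0<..<tB}" for t
    using deriv_u[OF that one_in] by (simp add: u_eq P_def exp_add)
  with eventually_inside show "\<forall>\<^sub>F t in at_left tB. deriv (u 1) t * u n t = lam 1 t * P t"
    by (rule eventually_mono)
qed

lemma lam_last_P_tendsto: "((\<lambda>t. lam n t * P t) \<longlongrightarrow> p) (at_left tB)"
proof (rule Lim_transform_eventually[OF lim_last])
  have "u 1 t * deriv (u n) t = lam n t * P t" if "t \<in> {0<..<tB}" for t
    using deriv_u[OF that n_in] by (simp add: u_eq P_def exp_add)
  with eventually_inside show "\<forall>\<^sub>F t in at_left tB. u 1 t * deriv (u n) t = lam n t * P t"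
    by (rule eventually_mono)
qed

lemma p_eq: "2 * p = lam0 n - lam0 1"
proof -
  have "((\<lambda>t. lam n t * P t - lam 1 t * P t) \<longlongrightarrow> p - - p) (at_left tB)"
    by (intro tendsto_diff lam_first_P_tendsto lam_last_P_tendsto)
  moreover have "lam n t * P t - lam 1 t * P t = lam0 n - lam0 1" if "t \<in> {0<..<tB}" for t
  proof -
    have "lam n t * P t - lam 1 t * P t = (lam n t - lam 1 t) * exp (Lam n t + Lam 1 t)"
      by (simp add: P_def left_diff_distrib add.commute)
    also have "\<dots> = lam0 n - lam0 1"
      using that by (intro lam_difference_conserved n_in one_in) auto
    finally show ?thesis .
  qed
  with eventually_inside have "\<forall>\<^sub>F t in at_left tB. lam n t * P t - lam 1 t * P t = lam0 n - lam0 1"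
    by (rule eventually_mono)
  ultimately have "((\<lambda>t. lam0 n - lam0 1) \<longlongrightarrow> p - - p) (at_left tB)"
    by (rule Lim_transform_eventually)
  then have "lam0 n - lam0 1 = p - - p"
    using tendsto_const_iff[OF trivial_limit_at_left_real] by blast
  then show ?thesis by simp
qed

lemma P_deriv:
  assumes "t \<in> {0<..<tB}"
  shows "(P has_real_derivative (lam 1 t + lam n t) * P t) (at t)"
  unfolding P_def[abs_def]
  by (rule DERIV_cong[OF DERIV_chain2[OF DERIV_exp
        DERIV_add[OF Lam_deriv_at[OF assms one_in] Lam_deriv_at[OF assms n_in]]]]) simp

lemma P_lipschitz:
  obtains a where "a < tB" and "1-lipschitz_on {a<..<tB} P"
proof (rule lipschitz_at_left_of_deriv_bound)
  have "((\<lambda>t. (lam 1 t + lam n t) * P t) \<longlongrightarrow> - p + p) (at_left tB)"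
    using tendsto_add[OF lam_first_P_tendsto lam_last_P_tendsto] by (simp add: algebra_simps)
  from tendstoD[OF this zero_less_one]
  have "\<forall>\<^sub>F t in at_left tB. \<bar>(lam 1 t + lam n t) * P t\<bar> < 1"
    by simp
  moreover have "\<forall>\<^sub>F t in at_left tB. (P has_real_derivative (lam 1 t + lam n t) * P t) (at t)"
    using eventually_inside by (rule eventually_mono) (rule P_deriv)
  ultimately show "\<forall>\<^sub>F t in at_left tB.
      (P has_real_derivative (lam 1 t + lam n t) * P t) (at t) \<and> \<bar>(lam 1 t + lam n t) * P t\<bar> \<le> 1"
    by eventually_elim (blast intro: less_imp_le)
qed

lemma lam_unbounded: "\<not> (\<exists>M. \<forall>i\<in>{1..n}. \<forall>t\<in>{0..<tB}. \<bar>lam i t\<bar> \<le> M)"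
proof
  assume "\<exists>M. \<forall>i\<in>{1..n}. \<forall>t\<in>{0..<tB}. \<bar>lam i t\<bar> \<le> M"
  then obtain M where M: "\<And>i t. i \<in> {1..n} \<Longrightarrow> t \<in> {0..<tB} \<Longrightarrow> \<bar>lam i t\<bar> \<le> M" by blast
  have "\<bar>rho t\<bar> \<le> rho0 * exp (real n * (M * tB))" if t: "t \<in> {0..<tB}" for t
  proof -
    have "- (\<Sum>i=1..n. Lam i t) \<le> (\<Sum>i=1..n. \<bar>Lam i t\<bar>)"
      using sum_abs[of "\<lambda>i. Lam i t" "{1..n}"] by linarith
    also have "\<dots> \<le> real n * (M * tB)"
      using sum_bounded_above[of "{1..n}" "\<lambda>i. \<bar>Lam i t\<bar>" "M * tB"] abs_Lam_le[OF t _ M] by simp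
    finally have "exp (- (\<Sum>i=1..n. Lam i t)) \<le> exp (real n * (M * tB))" by simp
    moreover have "rho t = rho0 * exp (- (\<Sum>i=1..n. Lam i t))"
      using rho_conserved[OF t] by (simp add: exp_minus field_simps)
    ultimately show ?thesis using rho0_pos by simp
  qed
  then show False
    using bounded_solution_extends[OF M] maximal by blast
qed

lemma lam_between: "i \<in> {1..n} \<Longrightarrow> t \<in> {0..<tB} \<Longrightarrow> lam 1 t \<le> lam i t \<and> lam i t \<le> lam n t"
  using lam_le_lam[OF one_in] lam_le_lam[OF _ n_in] lam0_between by blast

lemma lam_bounded_of_P_limit:
  assumes L: "(P \<longlongrightarrow> L) (at_left tB)" "L \<noteq> 0"
    and j: "j \<in> {1..n}" and lim: "((\<lambda>t. lam j t * P t) \<longlongrightarrow> c) (at_left tB)"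
  obtains M where "\<And>t. t \<in> {0..<tB} \<Longrightarrow> \<bar>lam j t\<bar> \<le> M"
proof (rule bounded_on_atLeastLessThan[OF T_pos continuous_on_lam[OF j]])
  have "(\<lambda>t. lam j t * P t / P t) = lam j"
    using P_pos by (simp add: fun_eq_iff less_imp_neq[symmetric])
  with tendsto_divide[OF lim L] have "(lam j \<longlongrightarrow> c / L) (at_left tB)" by simp
  from tendstoD[OF this zero_less_one]
  show "\<forall>\<^sub>F t in at_left tB. \<bar>lam j t\<bar> \<le> \<bar>c / L\<bar> + 1"
  proof eventually_elim
    case (elim t)
    then show ?case
      using abs_triangle_ineq2[of "lam j t" "c / L"] unfolding dist_real_def by linarith
  qed
qed blast

lemma P_tendsto_0: "(P \<longlongrightarrow> 0) (at_left tB)"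
proof -
  obtain a where "a < tB" "1-lipschitz_on {a<..<tB} P" by (rule P_lipschitz)
  then obtain L where L: "(P \<longlongrightarrow> L) (at_left tB)" by (rule convergent_at_left_of_lipschitz)
  have "L = 0"
  proof (rule ccontr)
    assume "L \<noteq> 0"
    obtain M1 where M1: "\<And>t. t \<in> {0..<tB} \<Longrightarrow> \<bar>lam 1 t\<bar> \<le> M1"
      using lam_bounded_of_P_limit[OF L \<open>L \<noteq> 0\<close> one_in lam_first_P_tendsto] by blast
    obtain Mn where Mn: "\<And>t. t \<in> {0..<tB} \<Longrightarrow> \<bar>lam n t\<bar> \<le> Mn"
      using lam_bounded_of_P_limit[OF L \<open>L \<noteq> 0\<close> n_in lam_last_P_tendsto] by blast
    have "\<bar>lam i t\<bar> \<le> max M1 Mn" if "i \<in> {1..n}" "t \<in> {0..<tB}" for i t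
      using lam_between[OF that] M1[OF that(2)] Mn[OF that(2)] by auto
    then show False using lam_unbounded by blast
  qed
  with L show ?thesis by simp
qed

lemma p_pos: "0 < p"
proof (rule ccontr)
  assume "\<not> 0 < p"
  then have "lam0 n = lam0 1" using p_eq lam0_between[OF n_in] by linarith
  then have equal: "lam0 i = lam0 1" if "i \<in> {1..n}" for i
    using lam0_between[OF that] by linarith
  have n_pos: "1 \<le> n" using n_ge_2 by simp
  obtain C where C: "\<And>t. t \<in> {0..<tB} \<Longrightarrow> C \<le> Lam 1 t"
    using Lam_bounded_below[OF equal n_pos k_pos cb_pos rho0_pos n_ge_2] by blast
  have lower: "exp (2 * C) \<le> P t" if "t \<in> {0..<tB}" for t
    using C[OF that] Lam_eq_Lam_first[OF equal n_pos n_in that] by (simp add: P_def)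
  have "\<forall>\<^sub>F t in at_left tB. P t < exp (2 * C)"
    using order_tendstoD(2)[OF P_tendsto_0, of "exp (2 * C)"] by simp
  then have "\<forall>\<^sub>F t in at_left tB. False"
    using eventually_inside
  proof eventually_elim
    case (elim t)
    then show False using lower[of t] by simp
  qed
  then show False by simp
qed

lemma P_le: "\<forall>\<^sub>F t in at_left tB. P t \<le> tB - t"
proof -
  obtain a where a: "a < tB" "1-lipschitz_on {a<..<tB} P" by (rule P_lipschitz)
  show ?thesis
    using eventually_at_left_real[OF a(1)]
    by eventually_elim (use abs_le_of_lipschitz_tendsto_0[OF a(2) P_tendsto_0] in force)
qed

lemma exponent_diverges:
  assumes "\<theta> \<noteq> 1"
  shows "filterlim (\<lambda>t. sgn (\<theta> - 1) * (Lam 1 t + \<theta> * Lam n t)) at_top (at_left tB)"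
proof (rule filterlim_at_top_of_deriv_ge)
  define c where "c = \<bar>\<theta> - 1\<bar> * p / 2"
  show c_pos: "0 < c" using assms p_pos by (simp add: c_def)
  have "((\<lambda>t. sgn (\<theta> - 1) * (lam 1 t * P t + \<theta> * (lam n t * P t)))
      \<longlongrightarrow> sgn (\<theta> - 1) * (- p + \<theta> * p)) (at_left tB)"
    by (intro tendsto_intros lam_first_P_tendsto lam_last_P_tendsto)
  moreover have "sgn (\<theta> - 1) * (- p + \<theta> * p) = \<bar>\<theta> - 1\<bar> * p"
    by (auto simp: sgn_if abs_if algebra_simps)
  then have "c < sgn (\<theta> - 1) * (- p + \<theta> * p)"
    using c_pos unfolding c_def by linarith
  ultimately have "\<forall>\<^sub>F t in at_left tB. c < sgn (\<theta> - 1) * (lam 1 t * P t + \<theta> * (lam n t * P t))"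
    by (rule order_tendstoD(1))
  with eventually_inside P_le show "\<forall>\<^sub>F t in at_left tB.
      ((\<lambda>t. sgn (\<theta> - 1) * (Lam 1 t + \<theta> * Lam n t)) has_real_derivative
        sgn (\<theta> - 1) * (lam 1 t + \<theta> * lam n t)) (at t)
      \<and> c / (tB - t) \<le> sgn (\<theta> - 1) * (lam 1 t + \<theta> * lam n t)"
  proof eventually_elim
    case (elim t)
    have "c / (tB - t) \<le> c / P t"
      using elim P_pos c_pos by (intro divide_left_mono) auto
    also have "\<dots> \<le> sgn (\<theta> - 1) * (lam 1 t + \<theta> * lam n t)"
      using elim(3) P_pos[of t] by (simp add: pos_divide_le_eq algebra_simps)
    finally have "c / (tB - t) \<le> sgn (\<theta> - 1) * (lam 1 t + \<theta> * lam n t)" .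
    moreover have "((\<lambda>t. sgn (\<theta> - 1) * (Lam 1 t + \<theta> * Lam n t)) has_real_derivative
        sgn (\<theta> - 1) * (lam 1 t + \<theta> * lam n t)) (at t)"
      by (intro DERIV_cmult DERIV_add Lam_deriv_at[OF elim(1) one_in] Lam_deriv_at[OF elim(1) n_in])
    ultimately show ?case by simp
  qed
qed

lemma u_powr_eq: "u 1 t * u n t powr \<theta> = exp (Lam 1 t + \<theta> * Lam n t)"
  by (simp add: u_eq powr_def exp_add)

theorem u_powr_tendsto_0:
  assumes "\<theta> \<le> 1"
  shows "((\<lambda>t. u 1 t * u n t powr \<theta>) \<longlongrightarrow> 0) (at_left tB)"
proof -
  have "((\<lambda>t. exp (Lam 1 t + \<theta> * Lam n t)) \<longlongrightarrow> 0) (at_left tB)"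
  proof (cases "\<theta> = 1")
    case True
    then show ?thesis using P_tendsto_0 by (simp add: P_def[abs_def])
  next
    case False
    then have "filterlim (\<lambda>t. - (Lam 1 t + \<theta> * Lam n t)) at_top (at_left tB)"
      using exponent_diverges[OF False] assms by simp
    then have "filterlim (\<lambda>t. Lam 1 t + \<theta> * Lam n t) at_bot (at_left tB)"
      using filterlim_uminus_at_bot[of "\<lambda>t. Lam 1 t + \<theta> * Lam n t"] by blast
    from filterlim_compose[OF exp_at_bot this] show ?thesis .
  qed
  then show ?thesis by (simp only: u_powr_eq)
qed

theorem u_powr_filterlim_at_top:
  assumes "1 < \<theta>"
  shows "filterlim (\<lambda>t. u 1 t * u n t powr \<theta>) at_top (at_left tB)"
  using filterlim_compose[OF exp_at_top exponent_diverges[of \<theta>]] assms by (simp only: u_powr_eq) simp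

end

theorem lemma5p1:
  fixes n J :: nat and k cb rho0 tB p q :: real
    and lam0 :: "nat \<Rightarrow> real"
    and lam :: "nat \<Rightarrow> real \<Rightarrow> real" and rho :: "real \<Rightarrow> real"
    and u :: "nat \<Rightarrow> real \<Rightarrow> real"
  assumes n2: "n \<ge> 2" and kpos: "k > 0" and cbpos: "cb > 0" and rho0pos: "rho0 > 0"
    and J: "1 \<le> J" "J \<le> n"
    and eqJ: "\<forall>i\<in>{1..J}. lam0 i = lam0 1"
    and gapJ: "J < n \<longrightarrow> lam0 J < lam0 (J + 1)"
    and ordJ: "\<forall>i j. J + 1 \<le> i \<and> i \<le> j \<and> j \<le> n \<longrightarrow> lam0 i \<le> lam0 j"
    and sol: "maximal_solution n k cb rho0 lam0 tB lam rho"
    and tB: "0 < tB"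
    and u_def: "\<And>i t. u i t = exp (integral {0..t} (lam i))"
    and p: "((\<lambda>t. deriv (u 1) t * u n t) \<longlongrightarrow> - p) (at_left tB)"
    and q: "((\<lambda>t. u 1 t * deriv (u n) t) \<longlongrightarrow> q) (at_left tB)"
    and pq: "p = q"
  shows "(\<forall>\<theta>::real. \<theta> \<le> 1 \<longrightarrow> ((\<lambda>t. u 1 t * u n t powr \<theta>) \<longlongrightarrow> 0) (at_left tB)) \<and>
         (\<forall>\<theta>::real. \<theta> > 1 \<longrightarrow>
            (\<forall>L. ((\<lambda>t. u 1 t * u n t powr \<theta>) \<longlongrightarrow> L) (at_left tB) \<longrightarrow> L = 0))"
proof -
  interpret blowup n k cb rho0 lam0 tB lam rho p u
  proof
    show "is_solution n k cb rho0 lam0 tB lam rho"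
      and "\<not> (\<exists>T > tB. \<exists>lam' rho'. is_solution n k cb rho0 lam0 T lam' rho')"
      using sol by (simp_all add: maximal_solution_def)
    show "\<And>i. i \<in> {1..n} \<Longrightarrow> lam0 1 \<le> lam0 i \<and> lam0 i \<le> lam0 n"
      by (rule lam0_between_of_blocks[OF J eqJ gapJ ordJ])
    show "((\<lambda>t. u 1 t * deriv (u n) t) \<longlongrightarrow> p) (at_left tB)"
      using q pq by simp
  qed (use n2 kpos cbpos rho0pos tB u_def p in auto)
  show ?thesis
  proof (intro conjI allI impI)
    fix \<theta> :: real
    assume "\<theta> \<le> 1"
    then show "((\<lambda>t. u 1 t * u n t powr \<theta>) \<longlongrightarrow> 0) (at_left tB)"
      by (rule u_powr_tendsto_0)
  next
    fix \<theta> L :: real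
    assume "1 < \<theta>" and "((\<lambda>t. u 1 t * u n t powr \<theta>) \<longlongrightarrow> L) (at_left tB)"
    then show "L = 0"
      using not_tendsto_and_filterlim_at_infinity[OF trivial_limit_at_left_real]
        filterlim_at_top_imp_at_infinity[OF u_powr_filterlim_at_top] by blast
  qed
qed

end
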